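(* Let $E\subseteq L$ be finite. If $E\models\bot$ then $\vec{\mathcal U}^E$ is empty, while if $E\not\models\bot$ then $\vec{\mathcal U}^E$ is full (so in either case $\vec{\mathcal U}^E\in\Upsilon$). In both cases $\preceq_E=\preceq_{\vec{\mathcal U}^E}$. Hence $\preceq_E$ is an E-relation.
   Context: $L$ is a propositional language built from a finite set of propositional variables with the connectives $\neg,\wedge,\vee,\rightarrow,\top,\bot$; $W$ is the finite set of propositional worlds. For $\theta\in L$, $S_\theta=\{w\in W\mid w\models\theta\}$; for $E\cup\{\phi\}\subseteq L$, $E\models\phi$ means $\bigcap_{\theta\in E}S_\theta\subseteq S_\phi$; $\models\phi$ means $\emptyset\models\phi$; a set $E$ is consistent iff $E\not\models\bot$. For $w\in W$, $\mathrm{sent}_E(w)=\{\theta\in E\mid w\models\theta\}$. Sequences: finite sequences $\vec{\mathcal U}=(\mathcal U_0,\ldots,\mathcal U_k)$ of mutually disjoint subsets of $W$ (components may be empty, possibly repeatedly). $\mathrm{rank}^{\vec{\mathcal U}}(\theta)$ is the least $i$ with $\mathcal U_i\cap S_\theta\neq\emptyset$, $\infty$ if none ($i<\infty$ for all integers $i$). $\theta\mid\!\sim_{\vec{\mathcal U}}\phi$ iff $\mathrm{rank}^{\vec{\mathcal U}}(\theta)<\mathrm{rank}^{\vec{\mathcal U}}(\theta\wedge\neg\phi)$ or $\mathrm{rank}^{\vec{\mathcal U}}(\theta)=\infty$. $\vec{\mathcal U}$ is full iff $\bigcup_i\mathcal U_i=W$, empty iff $\bigcup_i\mathcal U_i=\emptyset$;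 $\Upsilon$ is the set of sequences which are full or empty. For $\vec{\mathcal U}\in\Upsilon$, $\theta\preceq_{\vec{\mathcal U}}\phi$ iff (not $\neg\theta\vee\neg\phi\mid\!\sim_{\vec{\mathcal U}}\theta$) or $\neg\phi\mid\!\sim_{\vec{\mathcal U}}\bot$. E-relation: a relation $\preceq\subseteq L\times L$ such that for all $\theta,\phi,\psi$: (E1) $\theta\preceq\phi$ and $\phi\preceq\psi$ imply $\theta\preceq\psi$; (E2) $\theta\models\phi$ implies $\theta\preceq\phi$; (E3) $\theta\preceq\theta\wedge\phi$ or $\phi\preceq\theta\wedge\phi$; (E4) if $\bot\prec\psi$ for some $\psi$, then $\theta\preceq\phi$ for all $\theta$ implies $\models\phi$; here $\prec$ is the strict part of $\preceq$. Relation generated by a set: for $E\subseteq L$, define $\theta\prec_E\phi$ iff $E\not\models\bot$, $\not\models\theta$, and for every $E'\subseteq E$ such that $E'\cup\{\neg\phi\}$ is consistent there exists $E''\subseteq E$ with $|E'|<|E''|$ and $E''\cup\{\neg\theta\}$ consistent. The relation $\preceq_E$ is the relation with strict part $\prec_E$, i.e. $\theta\preceq_E\phi$ iff not $\phi\prec_E\theta$. For finite $E$ with $|E|=k$, set for $i=0,\ldots,k$: $\mathcal U^E_i=\{w\in W\mid |\mathrm{sent}_E(w)|=k-i\}$ if $E\not\models\bot$, and $\mathcal U^E_i=\emptyset$ otherwise; $\vec{\mathcal U}^E=(\mathcal U^E_0,\ldots,\mathcal U^E_k)$. *)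

theory Defs
  imports Main "HOL-Library.Extended_Nat"
begin

datatype 'v form = Var 'v | Neg "'v form" | Conj "'v form" "'v form"
  | Disj "'v form" "'v form" | Impl "'v form" "'v form" | Top | Bot

primrec sat :: "'v set \<Rightarrow> 'v form \<Rightarrow> bool" where
  "sat w (Var p) = (p \<in> w)"
| "sat w (Neg a) = (\<not> sat w a)"
| "sat w (Conj a b) = (sat w a \<and> sat w b)"
| "sat w (Disj a b) = (sat w a \<or> sat w b)"
| "sat w (Impl a b) = (sat w a \<longrightarrow> sat w b)"
| "sat w Top = True"
| "sat w Bot = False"

definition models_set :: "'v form \<Rightarrow> 'v set set" ("S") where
  "S \<theta> = {w. sat w \<theta>}"

definition entails :: "'v form set \<Rightarrow> 'v form \<Rightarrow> bool" where
  "entails E \<phi> \<longleftrightarrow> (\<Inter>\<theta>\<in>E. S \<theta>) \<subseteq> S \<phi>"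

definition valid :: "'v form \<Rightarrow> bool" where
  "valid \<phi> \<longleftrightarrow> entails {} \<phi>"

definition consistent :: "'v form set \<Rightarrow> bool" where
  "consistent E \<longleftrightarrow> \<not> entails E Bot"

definition sent :: "'v form set \<Rightarrow> 'v set \<Rightarrow> 'v form set" where
  "sent E w = {\<theta> \<in> E. sat w \<theta>}"

definition is_seq :: "'v set set list \<Rightarrow> bool" where
  "is_seq U \<longleftrightarrow> U \<noteq> [] \<and>
     (\<forall>i<length U. \<forall>j<length U. i \<noteq> j \<longrightarrow> U ! i \<inter> U ! j = {})"

definition rank :: "'v set set list \<Rightarrow> 'v form \<Rightarrow> enat" where
  "rank U \<theta> = (if \<exists>i<length U. U ! i \<inter> S \<theta> \<noteq> {}
     then enat (LEAST i. i < length U \<and> U ! i \<inter> S \<theta> \<noteq> {}) else \<infinity>)"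

definition nmc :: "'v set set list \<Rightarrow> 'v form \<Rightarrow> 'v form \<Rightarrow> bool" where
  "nmc U \<theta> \<phi> \<longleftrightarrow> rank U \<theta> < rank U (Conj \<theta> (Neg \<phi>)) \<or> rank U \<theta> = \<infinity>"

definition full_seq :: "'v set set list \<Rightarrow> bool" where
  "full_seq U \<longleftrightarrow> \<Union>(set U) = UNIV"

definition empty_seq :: "'v set set list \<Rightarrow> bool" where
  "empty_seq U \<longleftrightarrow> \<Union>(set U) = {}"

definition Upsilon :: "'v set set list set" where
  "Upsilon = {U. is_seq U \<and> (full_seq U \<or> empty_seq U)}"

definition pref_seq :: "'v set set list \<Rightarrow> 'v form \<Rightarrow> 'v form \<Rightarrow> bool" where
  "pref_seq U \<theta> \<phi> \<longleftrightarrow> \<not> nmc U (Disj (Neg \<theta>) (Neg \<phi>)) \<theta> \<or> nmc U (Neg \<phi>) Bot"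

definition strict :: "('a \<Rightarrow> 'a \<Rightarrow> bool) \<Rightarrow> 'a \<Rightarrow> 'a \<Rightarrow> bool" where
  "strict R x y \<longleftrightarrow> R x y \<and> \<not> R y x"

definition E_relation :: "('v form \<Rightarrow> 'v form \<Rightarrow> bool) \<Rightarrow> bool" where
  "E_relation R \<longleftrightarrow>
     (\<forall>\<theta> \<phi> \<psi>. R \<theta> \<phi> \<and> R \<phi> \<psi> \<longrightarrow> R \<theta> \<psi>) \<and>
     (\<forall>\<theta> \<phi>. entails {\<theta>} \<phi> \<longrightarrow> R \<theta> \<phi>) \<and>
     (\<forall>\<theta> \<phi>. R \<theta> (Conj \<theta> \<phi>) \<or> R \<phi> (Conj \<theta> \<phi>)) \<and>
     ((\<exists>\<psi>. strict R Bot \<psi>) \<longrightarrow> (\<forall>\<phi>. (\<forall>\<theta>. R \<theta> \<phi>) \<longrightarrow> valid \<phi>))"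

definition prec_gen :: "'v form set \<Rightarrow> 'v form \<Rightarrow> 'v form \<Rightarrow> bool" where
  "prec_gen E \<theta> \<phi> \<longleftrightarrow> consistent E \<and> \<not> valid \<theta> \<and>
     (\<forall>E' \<subseteq> E. consistent (E' \<union> {Neg \<phi>}) \<longrightarrow>
        (\<exists>E'' \<subseteq> E. card E' < card E'' \<and> consistent (E'' \<union> {Neg \<theta>})))"

definition pref_gen :: "'v form set \<Rightarrow> 'v form \<Rightarrow> 'v form \<Rightarrow> bool" where
  "pref_gen E \<theta> \<phi> \<longleftrightarrow> \<not> prec_gen E \<phi> \<theta>"

definition UE :: "'v form set \<Rightarrow> 'v set set list" where
  "UE E = map (\<lambda>i. if consistent E then {w. card (sent E w) = card E - i} else {})
            [0..<Suc (card E)]"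

end

theory Submission
  imports Defs
begin

text \<open>For a sequence \<open>U\<close>, \<open>\<theta> \<preceq>\<^sub>U \<phi>\<close> unfolds to \<open>rank\<^sup>U(\<not>\<theta>) \<le> rank\<^sup>U(\<not>\<phi>)\<close>. Rank is
  antitone in the set of models, turns disjunctions into minima and, on a full sequence, is
  infinite exactly on unsatisfiable formulas; so \<open>\<preceq>\<^sub>U\<close> is an E-relation whenever \<open>U\<close> is full
  or empty.
  For consistent \<open>E\<close>, \<open>U\<^sup>E\<close> layers the worlds by the number \<open>v(w)\<close> of sentences of \<open>E\<close>
  that \<open>w\<close> falsifies, so the rank of \<open>\<psi>\<close> in \<open>U\<^sup>E\<close> is the least \<open>v\<close>-value of a model of \<open>\<psi>\<close>. The subsets
  of \<open>E\<close> consistent with \<open>\<psi>\<close> are exactly the subsets of the sets \<open>sent\<^sub>E(w)\<close> with \<open>w \<Turnstile> \<psi>\<close>;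
  hence \<open>\<phi> \<prec>\<^sub>E \<theta>\<close> says that the least \<open>v\<close>-value on models of \<open>\<not>\<phi>\<close> is below the least one
  on models of \<open>\<not>\<theta>\<close>, and \<open>\<preceq>\<^sub>E\<close> coincides with the relation of \<open>U\<^sup>E\<close>.\<close>

lemma models_set_simps:
  "S (Neg a) = - S a" "S (Conj a b) = S a \<inter> S b" "S (Disj a b) = S a \<union> S b"
  "S Top = UNIV" "S Bot = {}"
  by (auto simp: models_set_def)

lemma consistent_iff_sat: "consistent X \<longleftrightarrow> (\<exists>w. \<forall>\<theta>\<in>X. sat w \<theta>)"
  unfolding consistent_def entails_def models_set_def by auto

lemma valid_iff_models_Neg_empty: "valid \<phi> \<longleftrightarrow> S (Neg \<phi>) = {}"
  by (auto simp: valid_def entails_def models_set_simps)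

lemma INF_enat_attained:
  assumes "A \<noteq> {}"
  obtains a where "a \<in> A" "(INF x\<in>A. enat (f x)) = enat (f a)"
proof -
  from assms obtain a0 where "a0 \<in> A" by blast
  then have "(INF x\<in>A. enat (f x)) \<in> (\<lambda>x. enat (f x)) ` A"
    by (intro wellorder_InfI) (rule imageI)
  then show thesis using that by blast
qed

lemma INF_enat_less_iff:
  "(INF x\<in>A. enat (f x)) < (INF x\<in>B. enat (f x)) \<longleftrightarrow>
     A \<noteq> {} \<and> (\<forall>b\<in>B. \<exists>a\<in>A. f a < f b)"
proof
  assume less: "(INF x\<in>A. enat (f x)) < (INF x\<in>B. enat (f x))"
  then have "A \<noteq> {}" by (auto simp: top_enat_def)
  then obtain a where a: "a \<in> A" "(INF x\<in>A. enat (f x)) = enat (f a)"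
    by (rule INF_enat_attained)
  have "f a < f b" if "b \<in> B" for b
  proof -
    have "enat (f a) < (INF x\<in>B. enat (f x))" using less a(2) by simp
    also have "\<dots> \<le> enat (f b)" using that by (rule INF_lower)
    finally show ?thesis by simp
  qed
  with \<open>A \<noteq> {}\<close> a(1) show "A \<noteq> {} \<and> (\<forall>b\<in>B. \<exists>a\<in>A. f a < f b)" by blast
next
  assume "A \<noteq> {} \<and> (\<forall>b\<in>B. \<exists>a\<in>A. f a < f b)"
  then have "A \<noteq> {}" and below: "\<forall>b\<in>B. \<exists>a\<in>A. f a < f b" by auto
  from \<open>A \<noteq> {}\<close> obtain a where "a \<in> A" and min_a: "(INF x\<in>A. enat (f x)) = enat (f a)"
    by (rule INF_enat_attained)
  show "(INF x\<in>A. enat (f x)) < (INF x\<in>B. enat (f x))"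
  proof (cases "B = {}")
    case True
    then show ?thesis using min_a by (simp add: top_enat_def)
  next
    case False
    then obtain b where "b \<in> B" and min_b: "(INF x\<in>B. enat (f x)) = enat (f b)"
      by (rule INF_enat_attained)
    with below obtain a' where "a' \<in> A" "f a' < f b" by blast
    then have "(INF x\<in>A. enat (f x)) < enat (f b)"
      by (meson INF_lower enat_ord_simps(2) order_le_less_trans)
    with min_b show ?thesis by simp
  qed
qed

lemma rank_eq_INF:
  "rank U \<psi> = (INF i \<in> {i. i < length U \<and> U ! i \<inter> S \<psi> \<noteq> {}}. enat i)"
proof (cases "\<exists>i<length U. U ! i \<inter> S \<psi> \<noteq> {}")
  case True
  define P where "P i \<longleftrightarrow> i < length U \<and> U ! i \<inter> S \<psi> \<noteq> {}" for i
  have "P (LEAST i. P i)"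
    using True unfolding P_def by (rule LeastI_ex)
  then have "enat (LEAST i. P i) = (INF i \<in> {i. P i}. enat i)"
    by (intro antisym INF_greatest INF_lower) (auto intro: Least_le)
  with True show ?thesis by (simp add: rank_def P_def)
next
  case False
  then have "{i. i < length U \<and> U ! i \<inter> S \<psi> \<noteq> {}} = {}" by auto
  with False show ?thesis by (simp only: rank_def if_False image_empty Inf_empty top_enat_def)
qed

lemma rank_cong: "S \<phi> = S \<psi> \<Longrightarrow> rank U \<phi> = rank U \<psi>"
  by (simp add: rank_def)

lemma rank_antimono: "S \<phi> \<subseteq> S \<psi> \<Longrightarrow> rank U \<psi> \<le> rank U \<phi>"
  unfolding rank_eq_INF by (rule INF_superset_mono) auto

lemma rank_Disj: "rank U (Disj \<phi> \<psi>) = min (rank U \<phi>) (rank U \<psi>)"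
proof -
  have "{i. i < length U \<and> U ! i \<inter> S (Disj \<phi> \<psi>) \<noteq> {}} =
      {i. i < length U \<and> U ! i \<inter> S \<phi> \<noteq> {}} \<union> {i. i < length U \<and> U ! i \<inter> S \<psi> \<noteq> {}}"
    by (auto simp: models_set_simps)
  then show ?thesis
    by (simp only: rank_eq_INF INF_union inf_min)
qed

lemma rank_eq_infinity_iff: "rank U \<psi> = \<infinity> \<longleftrightarrow> \<Union>(set U) \<inter> S \<psi> = {}"
proof -
  have "(\<exists>i<length U. U ! i \<inter> S \<psi> \<noteq> {}) \<longleftrightarrow> \<Union>(set U) \<inter> S \<psi> \<noteq> {}"
    unfolding set_conv_nth by blast
  then show ?thesis by (simp add: rank_def)
qed

lemma pref_seq_iff_rank_le: "pref_seq U \<theta> \<phi> \<longleftrightarrow> rank U (Neg \<theta>) \<le> rank U (Neg \<phi>)"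
proof -
  have "rank U (Conj (Disj (Neg \<theta>) (Neg \<phi>)) (Neg \<theta>)) = rank U (Neg \<theta>)"
    "rank U (Conj (Neg \<phi>) (Neg Bot)) = rank U (Neg \<phi>)"
    by (auto intro: rank_cong simp: models_set_simps)
  then show ?thesis
    unfolding pref_seq_def nmc_def rank_Disj
    by (cases "rank U (Neg \<theta>)"; cases "rank U (Neg \<phi>)") (auto simp: min_def)
qed

lemma E_relation_pref_seq:
  fixes U :: "'v set set list"
  assumes "full_seq U \<or> empty_seq U"
  shows "E_relation (pref_seq U)"
  unfolding E_relation_def pref_seq_iff_rank_le
proof (intro conjI allI impI)
  fix \<theta> \<phi> \<psi> :: "'v form"
  assume "rank U (Neg \<theta>) \<le> rank U (Neg \<phi>) \<and> rank U (Neg \<phi>) \<le> rank U (Neg \<psi>)"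
  then show "rank U (Neg \<theta>) \<le> rank U (Neg \<psi>)" by (blast intro: order_trans)
next
  fix \<theta> \<phi> :: "'v form"
  assume "entails {\<theta>} \<phi>"
  then have "S (Neg \<phi>) \<subseteq> S (Neg \<theta>)" by (auto simp: entails_def models_set_simps)
  then show "rank U (Neg \<theta>) \<le> rank U (Neg \<phi>)" by (rule rank_antimono)
next
  fix \<theta> \<phi> :: "'v form"
  have "rank U (Neg (Conj \<theta> \<phi>)) = rank U (Disj (Neg \<theta>) (Neg \<phi>))"
    by (rule rank_cong) (auto simp: models_set_simps)
  then show "rank U (Neg \<theta>) \<le> rank U (Neg (Conj \<theta> \<phi>)) \<or>
      rank U (Neg \<phi>) \<le> rank U (Neg (Conj \<theta> \<phi>))"
    by (auto simp: rank_Disj min_def)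
next
  fix \<phi> :: "'v form"
  assume "\<exists>\<psi>. strict (\<lambda>\<theta> \<phi>. rank U (Neg \<theta>) \<le> rank U (Neg \<phi>)) Bot \<psi>"
  then obtain \<psi> where "rank U (Neg Bot) < rank U (Neg \<psi>)"
    by (auto simp: strict_def not_le)
  then have "rank U (Neg Bot) \<noteq> \<infinity>" by (metis enat_ord_simps(6))
  then have full: "full_seq U"
    using assms by (auto simp: rank_eq_infinity_iff empty_seq_def)
  assume "\<forall>\<theta>. rank U (Neg \<theta>) \<le> rank U (Neg \<phi>)"
  then have "rank U (Neg Top) \<le> rank U (Neg \<phi>)" ..
  moreover have "rank U (Neg Top) = \<infinity>"
    by (simp add: rank_eq_infinity_iff models_set_simps)
  ultimately have "rank U (Neg \<phi>) = \<infinity>" by simp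
  with full show "valid \<phi>"
    by (simp add: rank_eq_infinity_iff full_seq_def valid_iff_models_Neg_empty)
qed

definition layers :: "('w \<Rightarrow> nat) \<Rightarrow> nat \<Rightarrow> 'w set list" where
  "layers r n = map (\<lambda>i. {w. r w = i}) [0..<n]"

lemma full_seq_layers: "(\<And>w. r w < n) \<Longrightarrow> full_seq (layers r n)"
  by (auto simp: full_seq_def layers_def)

lemma rank_layers:
  assumes "\<And>w. r w < n"
  shows "rank (layers r n) \<psi> = (INF w\<in>S \<psi>. enat (r w))"
proof -
  have "{i. i < length (layers r n) \<and> layers r n ! i \<inter> S \<psi> \<noteq> {}} = r ` S \<psi>"
    using assms by (auto simp: layers_def)
  then show ?thesis
    by (simp add: rank_eq_INF image_image)
qed

definition violated :: "'v form set \<Rightarrow> 'v set \<Rightarrow> nat" where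
  "violated E w = card E - card (sent E w)"

lemma violated_less: "violated E w < Suc (card E)"
  by (simp add: violated_def)

lemma card_sent_le: "finite E \<Longrightarrow> card (sent E w) \<le> card E"
  by (rule card_mono) (auto simp: sent_def)

lemma UE_eq_layers:
  assumes "finite E" "consistent E"
  shows "UE E = layers (violated E) (Suc (card E))"
  unfolding UE_def layers_def violated_def
  using assms card_sent_le[OF assms(1)] by (auto simp del: upt_Suc)

lemma empty_seq_UE: "\<not> consistent E \<Longrightarrow> empty_seq (UE E)"
  by (auto simp: empty_seq_def UE_def)

lemma is_seq_UE: "is_seq (UE E)"
  by (auto simp: is_seq_def UE_def simp del: upt_Suc)

lemma consistent_sent_insert: "w \<in> S \<psi> \<Longrightarrow> consistent (sent E w \<union> {\<psi>})"
  unfolding consistent_iff_sat by (auto simp: sent_def models_set_def)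

lemma consistent_insert_card_le_sent:
  assumes "finite E" "E' \<subseteq> E" "consistent (E' \<union> {\<psi>})"
  obtains w where "w \<in> S \<psi>" "card E' \<le> card (sent E w)"
proof -
  obtain w where w: "\<forall>\<theta>\<in>E' \<union> {\<psi>}. sat w \<theta>"
    using assms(3) unfolding consistent_iff_sat ..
  then have "w \<in> S \<psi>" by (simp add: models_set_def)
  moreover have "E' \<subseteq> sent E w" using w assms(2) by (auto simp: sent_def)
  then have "card E' \<le> card (sent E w)"
    using assms(1) by (intro card_mono) (auto simp: sent_def)
  ultimately show thesis by (rule that)
qed

lemma prec_gen_iff_INF_violated_less:
  assumes "finite E"
  shows "prec_gen E \<phi> \<theta> \<longleftrightarrow> consistent E \<and>
    (INF w\<in>S (Neg \<phi>). enat (violated E w)) < (INF w\<in>S (Neg \<theta>). enat (violated E w))"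
proof -
  have more_sat: "(\<forall>E'\<subseteq>E. consistent (E' \<union> {Neg \<theta>}) \<longrightarrow>
        (\<exists>E''\<subseteq>E. card E' < card E'' \<and> consistent (E'' \<union> {Neg \<phi>}))) \<longleftrightarrow>
      (\<forall>w'\<in>S (Neg \<theta>). \<exists>w\<in>S (Neg \<phi>). card (sent E w') < card (sent E w))"
    (is "?subsets \<longleftrightarrow> ?worlds")
  proof
    assume ?subsets
    show ?worlds
    proof
      fix w' assume "w' \<in> S (Neg \<theta>)"
      then have "consistent (sent E w' \<union> {Neg \<theta>})" by (rule consistent_sent_insert)
      moreover have "sent E w' \<subseteq> E" by (simp add: sent_def)
      ultimately obtain E'' where E'': "E'' \<subseteq> E" "consistent (E'' \<union> {Neg \<phi>})"
        and more: "card (sent E w') < card E''" using \<open>?subsets\<close> by blast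
      from assms E'' obtain w where "w \<in> S (Neg \<phi>)" "card E'' \<le> card (sent E w)"
        by (rule consistent_insert_card_le_sent)
      with more show "\<exists>w\<in>S (Neg \<phi>). card (sent E w') < card (sent E w)"
        by (blast intro: order_less_le_trans)
    qed
  next
    assume ?worlds
    show ?subsets
    proof (intro allI impI)
      fix E' assume "E' \<subseteq> E" "consistent (E' \<union> {Neg \<theta>})"
      with assms obtain w' where "w' \<in> S (Neg \<theta>)" "card E' \<le> card (sent E w')"
        by (rule consistent_insert_card_le_sent)
      with \<open>?worlds\<close> obtain w where w: "w \<in> S (Neg \<phi>)" "card E' < card (sent E w)"
        by (blast intro: order_le_less_trans)
      have "sent E w \<subseteq> E" by (simp add: sent_def)
      with w show "\<exists>E''\<subseteq>E. card E' < card E'' \<and> consistent (E'' \<union> {Neg \<phi>})"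
        by (blast intro: consistent_sent_insert)
    qed
  qed
  have "card (sent E w') < card (sent E w) \<longleftrightarrow> violated E w < violated E w'" for w w'
    using card_sent_le[OF assms, of w] card_sent_le[OF assms, of w'] by (auto simp: violated_def)
  then show ?thesis
    unfolding prec_gen_def more_sat INF_enat_less_iff valid_iff_models_Neg_empty by simp
qed

lemma pref_gen_eq_pref_seq_UE:
  fixes E :: "'v form set"
  assumes "finite E"
  shows "pref_gen E = pref_seq (UE E)"
proof (intro ext)
  fix \<theta> \<phi> :: "'v form"
  show "pref_gen E \<theta> \<phi> = pref_seq (UE E) \<theta> \<phi>"
  proof (cases "consistent E")
    case False
    then have "rank (UE E) \<psi> = \<infinity>" for \<psi>
      using empty_seq_UE[OF False] unfolding rank_eq_infinity_iff empty_seq_def by blast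
    with False show ?thesis
      by (simp add: pref_gen_def prec_gen_def pref_seq_iff_rank_le)
  next
    case True
    then show ?thesis
      using assms
      by (simp add: pref_gen_def prec_gen_iff_INF_violated_less pref_seq_iff_rank_le
          UE_eq_layers rank_layers violated_less not_less)
  qed
qed

theorem proposition8:
  fixes E :: "('v::finite) form set"
  assumes "finite E"
  shows "(entails E Bot \<longrightarrow> empty_seq (UE E))
       \<and> (\<not> entails E Bot \<longrightarrow> full_seq (UE E))
       \<and> UE E \<in> Upsilon
       \<and> pref_gen E = pref_seq (UE E)
       \<and> E_relation (pref_gen E)"
proof -
  have empty: "entails E Bot \<longrightarrow> empty_seq (UE E)"
    by (simp add: empty_seq_UE consistent_def)
  have full: "\<not> entails E Bot \<longrightarrow> full_seq (UE E)"
    using assms by (simp add: consistent_def UE_eq_layers full_seq_layers violated_less)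
  have "UE E \<in> Upsilon"
    using empty full is_seq_UE by (auto simp: Upsilon_def)
  moreover have "E_relation (pref_seq (UE E))"
    using empty full by (intro E_relation_pref_seq) blast
  ultimately show ?thesis
    using empty full pref_gen_eq_pref_seq_UE[OF assms] by simp
qed

end
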